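(* Let $D\ge2$ be an integer and $\mathbf p=(p_1,\dots,p_D)$ a probability distribution with Shannon entropy $H(\mathbf p)=-\sum_ip_i\log_2p_i$, and for $\mathbf i=(i_1,\dots,i_N)\in\{1,\dots,D\}^N$ put $p_{\mathbf i}=p_{i_1}\cdots p_{i_N}$. Fix $R<\frac{H(\mathbf p)+1}{2}$, and for each $N$ let $S(N)$ be a collection of pairs $(\mathbf i,\mathbf s)$ with $\mathbf i\in\{1,\dots,D\}^N$ and $\mathbf s\in\{+,-\}^{N-1}$ such that $|S(N)|=2^{2NR-1}$. Then for every $\eta>0$ there exists $N_0$ such that for all $N\ge N_0$, \[ \sum_{(\mathbf i,\mathbf s)\in S(N)}p_{\mathbf i}\frac{1}{2^{N-1}}<\eta . \] *)

theory Defs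
  imports Complex_Main
begin

text \<open>Shannon entropy (base 2) of a distribution p on {1..D}; terms with p i = 0
  contribute 0 (in Isabelle, log 2 0 = 0 anyway, and 0 * _ = 0).\<close>
definition shannon_entropy :: "nat \<Rightarrow> (nat \<Rightarrow> real) \<Rightarrow> real" where
  "shannon_entropy D p = - (\<Sum>i=1..D. p i * log 2 (p i))"

definition prob_dist :: "nat \<Rightarrow> (nat \<Rightarrow> real) \<Rightarrow> bool" where
  "prob_dist D p \<longleftrightarrow> (\<forall>i\<in>{1..D}. 0 \<le> p i) \<and> (\<Sum>i=1..D. p i) = 1"

definition idx_strings :: "nat \<Rightarrow> nat \<Rightarrow> nat list set" where
  "idx_strings D N = {xs. length xs = N \<and> set xs \<subseteq> {1..D}}"

text \<open>Sign strings s in {+,-}^(N-1), as boolean lists (True = +).\<close>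
definition sign_strings :: "nat \<Rightarrow> bool list set" where
  "sign_strings N = {ss. length ss = N - 1}"

definition prod_prob :: "(nat \<Rightarrow> real) \<Rightarrow> nat list \<Rightarrow> real" where
  "prod_prob p xs = (\<Prod>x\<leftarrow>xs. p x)"

end

theory Submission imports Defs begin

text \<open>Chernoff bound. Fix 2R - 1 < a < H(p). For s \<ge> 0 and every string,
  p_i \<le> 2^(-aN) + p_i (2^(aN) p_i)^s, since the second term dominates as soon as p_i > 2^(-aN).
  Summing the first term over S(N) gives |S(N)| 2^(-aN) / 2^(N-1) \<le> 2^((2R - 1 - a) N); summing
  the second over all strings (the sign strings cancel the normalisation) factorises into g(s)^N
  with g(s) = \<Sigma>_j p_j (2^a p_j)^s. Now g(0) = 1 and g'(0) = (a - H(p)) ln 2 < 0, so g(s) < 1 for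
  some s > 0, and both terms decay geometrically.\<close>

lemma sum_lists_length_prod_list:
  fixes f :: "'a \<Rightarrow> 'b::comm_semiring_1"
  assumes "finite A"
  shows "(\<Sum>xs\<in>{xs. set xs \<subseteq> A \<and> length xs = n}. \<Prod>x\<leftarrow>xs. f x) = (\<Sum>x\<in>A. f x) ^ n"
proof (induction n)
  case 0
  have "{xs. set xs \<subseteq> A \<and> length xs = 0} = {[]}" by auto
  then show ?case by simp
next
  case (Suc n)
  let ?L = "{xs. set xs \<subseteq> A \<and> length xs = n}"
  have inj: "inj_on (\<lambda>(xs, y). y # xs) (?L \<times> A)" by (auto simp: inj_on_def)
  have "(\<Sum>xs\<in>{xs. set xs \<subseteq> A \<and> length xs = Suc n}. \<Prod>x\<leftarrow>xs. f x)
      = (\<Sum>(xs, y)\<in>?L \<times> A. f y * (\<Prod>x\<leftarrow>xs. f x))"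
    unfolding lists_length_Suc_eq by (subst sum.reindex[OF inj]) (simp add: case_prod_unfold)
  also have "\<dots> = (\<Sum>xs\<in>?L. \<Prod>x\<leftarrow>xs. f x) * (\<Sum>y\<in>A. f y)"
    by (simp add: sum.cartesian_product[symmetric] sum_distrib_left sum_distrib_right mult.commute)
  finally show ?case using Suc by (simp add: mult.commute)
qed

lemma finite_idx_strings: "finite (idx_strings D N)"
  using finite_lists_length_eq[of "{1..D}" N] by (simp add: idx_strings_def conj_commute)

lemma finite_sign_strings: "finite (sign_strings N)"
  using finite_lists_length_eq[of "UNIV :: bool set" "N - 1"] by (simp add: sign_strings_def)

lemma card_sign_strings: "card (sign_strings N) = 2 ^ (N - 1)"
  using card_lists_length_eq[of "UNIV :: bool set" "N - 1"] by (simp add: sign_strings_def)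

lemma prod_prob_nonneg:
  assumes "\<forall>x\<in>set xs. 0 \<le> p x"
  shows "0 \<le> prod_prob p xs"
  using assms unfolding prod_prob_def by (induction xs) auto

lemma sum_idx_strings_prod_prob:
  "(\<Sum>xs\<in>idx_strings D N. prod_prob f xs) = (\<Sum>j=1..D. f j) ^ N"
  using sum_lists_length_prod_list[of "{1..D}" f N]
  by (simp add: idx_strings_def prod_prob_def conj_commute)

lemma prod_prob_tilted:
  assumes "\<forall>x\<in>set xs. 0 \<le> p x" and "0 \<le> c"
  shows "prod_prob (\<lambda>x. p x * (c * p x) powr s) xs
       = prod_prob p xs * (c ^ length xs * prod_prob p xs) powr s"
  using assms(1)
proof (induction xs)
  case Nil
  then show ?case by (simp add: prod_prob_def)
next
  case (Cons y xs)
  have "0 \<le> p y" and "0 \<le> prod_prob p xs"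
    using Cons.prems prod_prob_nonneg[of xs p] by auto
  then have "(c * p y) powr s * (c ^ length xs * prod_prob p xs) powr s
      = (c ^ length (y # xs) * prod_prob p (y # xs)) powr s"
    using assms(2) by (simp add: powr_mult[symmetric] prod_prob_def algebra_simps)
  then show ?case using Cons by (simp add: prod_prob_def algebra_simps)
qed

lemma le_add_mult_powr:
  fixes P t s :: real
  assumes "0 \<le> P" "0 < t" "0 \<le> s"
  shows "P \<le> t + P * (P / t) powr s"
proof (cases "P \<le> t")
  case True
  then show ?thesis using assms by (simp add: add_increasing2)
next
  case False
  then have "1 \<le> (P / t) powr s" using assms by (simp add: ge_one_powr_ge_zero)
  then have "P \<le> P * (P / t) powr s" using assms by (simp add: mult_le_cancel_left1)
  then show ?thesis using assms by simp
qed

lemma sum_prod_prob_le_chernoff: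
  assumes p: "\<forall>j\<in>{1..D}. 0 \<le> p j"
    and S: "S \<subseteq> idx_strings D N \<times> sign_strings N"
    and "0 < c" "0 \<le> s"
  shows "(\<Sum>(xs, ss)\<in>S. prod_prob p xs)
       \<le> card S / c ^ N + 2 ^ (N - 1) * (\<Sum>j=1..D. p j * (c * p j) powr s) ^ N"
proof -
  define q where "q = (\<lambda>x. p x * (c * p x) powr s)"
  have q: "0 \<le> prod_prob q xs" if "xs \<in> idx_strings D N" for xs
    using that p by (intro prod_prob_nonneg) (auto simp: q_def idx_strings_def)
  have point: "prod_prob p xs \<le> 1 / c ^ N + prod_prob q xs" if "xs \<in> idx_strings D N" for xs
  proof -
    have nonneg: "\<forall>x\<in>set xs. 0 \<le> p x" and len: "length xs = N"
      using that p by (auto simp: idx_strings_def)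
    have "prod_prob q xs = prod_prob p xs * (prod_prob p xs / (1 / c ^ N)) powr s"
      using prod_prob_tilted[OF nonneg] \<open>0 < c\<close> by (simp add: q_def len mult.commute)
    then show ?thesis
      using le_add_mult_powr[OF prod_prob_nonneg[OF nonneg], of "1 / c ^ N" s] \<open>0 < c\<close> \<open>0 \<le> s\<close>
      by simp
  qed
  have "(\<Sum>(xs, ss)\<in>S. prod_prob q xs)
      \<le> (\<Sum>(xs, ss)\<in>idx_strings D N \<times> sign_strings N. prod_prob q xs)"
    using S q finite_idx_strings finite_sign_strings by (intro sum_mono2) auto
  also have "\<dots> = card (sign_strings N) * (\<Sum>xs\<in>idx_strings D N. prod_prob q xs)"
    by (simp add: sum.cartesian_product[symmetric] sum_distrib_left mult.commute)
  also have "\<dots> = 2 ^ (N - 1) * (\<Sum>j=1..D. q j) ^ N"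
    unfolding card_sign_strings sum_idx_strings_prod_prob by simp
  finally have sum_q: "(\<Sum>(xs, ss)\<in>S. prod_prob q xs) \<le> 2 ^ (N - 1) * (\<Sum>j=1..D. q j) ^ N" .
  have "(\<Sum>(xs, ss)\<in>S. prod_prob p xs) \<le> (\<Sum>(xs, ss)\<in>S. 1 / c ^ N + prod_prob q xs)"
    using S point by (intro sum_mono) auto
  also have "\<dots> = card S / c ^ N + (\<Sum>(xs, ss)\<in>S. prod_prob q xs)"
    by (simp add: case_prod_unfold sum.distrib)
  finally show ?thesis
    using sum_q unfolding q_def by linarith
qed

lemma tilted_moment_lt_one:
  assumes "prob_dist D p" and "a < shannon_entropy D p"
  obtains s where "0 < s" and "(\<Sum>j=1..D. p j * (2 powr a * p j) powr s) < 1"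
proof -
  have p: "0 \<le> p j" if "j \<in> {1..D}" for j
    using assms(1) that by (simp add: prob_dist_def)
  have sum_p: "(\<Sum>j=1..D. p j) = 1"
    using assms(1) by (simp add: prob_dist_def)
  define g where "g s = (\<Sum>j=1..D. p j * exp (s * ln (2 powr a * p j)))" for s
  have g_eq: "g s = (\<Sum>j=1..D. p j * (2 powr a * p j) powr s)" for s
    unfolding g_def using p by (intro sum.cong) (auto simp: powr_def)
  have "DERIV g 0 :> (\<Sum>j=1..D. p j * ln (2 powr a * p j))"
    unfolding g_def by (auto intro!: derivative_eq_intros simp: mult.commute)
  also have "(\<Sum>j=1..D. p j * ln (2 powr a * p j))
      = (\<Sum>j=1..D. a * ln 2 * p j + p j * ln (p j))"
    using p by (intro sum.cong) (auto simp: ln_mult distrib_left)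
  also have "\<dots> = a * ln 2 * (\<Sum>j=1..D. p j) + (\<Sum>j=1..D. p j * ln (p j))"
    by (simp add: sum.distrib sum_distrib_left)
  also have "\<dots> = (a - shannon_entropy D p) * ln 2"
    unfolding sum_p by (simp add: shannon_entropy_def log_def sum_divide_distrib[symmetric] algebra_simps)
  finally have "DERIV g 0 :> (a - shannon_entropy D p) * ln 2" .
  moreover have "(a - shannon_entropy D p) * ln 2 < 0"
    using assms(2) by (simp add: mult_neg_pos)
  ultimately obtain d where "0 < d" and dec: "\<forall>h>0. h < d \<longrightarrow> g (0 + h) < g 0"
    using DERIV_neg_dec_right by blast
  have "g 0 = 1"
    using sum_p by (simp add: g_def)
  then have "g (d / 2) < 1"
    using dec \<open>0 < d\<close> by simp
  then show ?thesis
    using that[of "d / 2"] \<open>0 < d\<close> by (simp add: g_eq)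
qed

lemma powr_div_pow_pow_eq:
  fixes N :: nat and R a :: real
  assumes "1 \<le> N"
  shows "2 powr (2 * real N * R - 1) / ((2 powr a) ^ N * 2 ^ (N - 1)) = (2 powr (2 * R - 1 - a)) ^ N"
proof -
  have "(2 powr a) ^ N * 2 ^ (N - 1) = (2::real) powr (a * N + (real N - 1))"
    using assms by (simp add: powr_realpow[symmetric] powr_powr powr_add of_nat_diff)
  moreover have "(2 powr (2 * R - 1 - a)) ^ N = (2::real) powr ((2 * R - 1 - a) * N)"
    by (simp add: powr_realpow[symmetric] powr_powr)
  ultimately show ?thesis
    by (simp add: powr_diff[symmetric] algebra_simps)
qed

lemma normalised_sum_prod_prob_le:
  assumes p: "\<forall>j\<in>{1..D}. 0 \<le> p j"
    and S: "S \<subseteq> idx_strings D N \<times> sign_strings N"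
    and card_S: "card S \<le> 2 powr (2 * real N * R - 1)"
    and "1 \<le> N" "0 \<le> s"
  shows "(\<Sum>(xs, ss)\<in>S. prod_prob p xs * (1 / 2 ^ (N - 1)))
       \<le> (2 powr (2 * R - 1 - a)) ^ N + (\<Sum>j=1..D. p j * (2 powr a * p j) powr s) ^ N"
proof -
  define g where "g = (\<Sum>j=1..D. p j * (2 powr a * p j) powr s)"
  have "(\<Sum>(xs, ss)\<in>S. prod_prob p xs * (1 / 2 ^ (N - 1)))
      = (\<Sum>(xs, ss)\<in>S. prod_prob p xs) / 2 ^ (N - 1)"
    by (simp add: case_prod_unfold sum_divide_distrib)
  also have "\<dots> \<le> (card S / (2 powr a) ^ N + 2 ^ (N - 1) * g ^ N) / 2 ^ (N - 1)"
    using sum_prod_prob_le_chernoff[OF p S, of "2 powr a" s] \<open>0 \<le> s\<close>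
    by (simp add: g_def divide_right_mono)
  also have "\<dots> = card S / ((2 powr a) ^ N * 2 ^ (N - 1)) + g ^ N"
    by (simp add: add_divide_distrib)
  also have "\<dots> \<le> 2 powr (2 * real N * R - 1) / ((2 powr a) ^ N * 2 ^ (N - 1)) + g ^ N"
    using card_S by (simp add: divide_right_mono)
  finally show ?thesis
    by (simp only: powr_div_pow_pow_eq[OF \<open>1 \<le> N\<close>] g_def)
qed

theorem lemma3:
  fixes D :: nat and p :: "nat \<Rightarrow> real" and R :: real
    and S :: "nat \<Rightarrow> (nat list \<times> bool list) set"
  assumes "D \<ge> 2"
    and "prob_dist D p"
    and "R < (shannon_entropy D p + 1) / 2"
    and "\<And>N. N \<ge> 1 \<Longrightarrow> S N \<subseteq> idx_strings D N \<times> sign_strings N"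
    and "\<And>N. N \<ge> 1 \<Longrightarrow> card (S N) = nat \<lfloor>2 powr (2 * real N * R - 1)\<rfloor>"
  shows "\<forall>\<eta>>0. \<exists>N0. \<forall>N\<ge>N0.
           (\<Sum>(xs, ss)\<in>S N. prod_prob p xs * (1 / 2 ^ (N - 1))) < \<eta>"
proof (intro allI impI)
  fix \<eta> :: real
  assume "0 < \<eta>"
  have p: "\<forall>j\<in>{1..D}. 0 \<le> p j"
    using assms(2) by (simp add: prob_dist_def)
  have "2 * R - 1 < shannon_entropy D p"
    using assms(3) by (simp add: field_simps)
  then obtain a where "2 * R - 1 < a" and "a < shannon_entropy D p"
    using dense by blast
  then obtain s where "0 < s" and "(\<Sum>j=1..D. p j * (2 powr a * p j) powr s) < 1"
    using tilted_moment_lt_one[OF assms(2)] by blast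
  moreover define b g where "b = (2::real) powr (2 * R - 1 - a)"
    and "g = (\<Sum>j=1..D. p j * (2 powr a * p j) powr s)"
  ultimately have "0 \<le> b" "b < 1" "0 \<le> g" "g < 1"
    using p \<open>2 * R - 1 < a\<close> by (auto simp: powr_less_one intro: sum_nonneg)
  then have "(\<lambda>N. b ^ N + g ^ N) \<longlonglongrightarrow> 0"
    using tendsto_add[OF LIMSEQ_realpow_zero LIMSEQ_realpow_zero] by simp
  then have "\<forall>\<^sub>F N in sequentially. 1 \<le> N \<and> b ^ N + g ^ N < \<eta>"
    using \<open>0 < \<eta>\<close> eventually_ge_at_top by (auto intro: eventually_conj order_tendstoD(2))
  moreover have "(\<Sum>(xs, ss)\<in>S N. prod_prob p xs * (1 / 2 ^ (N - 1))) \<le> b ^ N + g ^ N"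
    if "1 \<le> N" for N
    using normalised_sum_prod_prob_le[OF p assms(4)[OF that] _ that less_imp_le[OF \<open>0 < s\<close>]]
      assms(5)[OF that] by (simp add: b_def g_def)
  ultimately show "\<exists>N0. \<forall>N\<ge>N0. (\<Sum>(xs, ss)\<in>S N. prod_prob p xs * (1 / 2 ^ (N - 1))) < \<eta>"
    unfolding eventually_sequentially by (meson le_less_trans)
qed

end
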